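(* Let $s\in\mathbb{N}$, $0<\alpha\le1$, $p>\alpha^{-1}$ (with $p\le\infty$), and $q\in[1,\infty]$. For every point set $P=\{\mathbf{x}_0,\dots,\mathbf{x}_{N-1}\}\subset[0,1]^s$ we have $$e^{\mathrm{wor}}(Q_P,\mathcal{H}_{\alpha,s,p,q})=D^*_{\alpha,s,p',q'}(P),$$ where $Q_P(f)=\frac1N\sum_{n=0}^{N-1}f(\mathbf{x}_n)$ and $1/p+1/p'=1=1/q+1/q'$.
   Context: Let $S=\{1,\dots,s\}$. For $u\subseteq S$ write $\mathbf{t}_u=(t_j)_{j\in u}\in[0,1]^u$; $(x-t)_+^{\alpha-1}$ means $(x-t)^{\alpha-1}$ if $x>t$ and $0$ otherwise. Convention: $L_p([0,1]^\emptyset)=\mathbb{R}$ with absolute value as norm, and the integral over $[0,1]^\emptyset$ of $\tilde f_\emptyset$ is $\tilde f_\emptyset$. Space of fractional smoothness: $\mathcal{H}_{\alpha,s,p}$ is the set of functions $f:[0,1]^s\to\mathbb{R}$ of the form $f(\mathbf{x})=\sum_{u\subseteq S}\Gamma(\alpha)^{-|u|}\int_{[0,1]^u}\tilde f_u(\mathbf{t}_u)\prod_{j\in u}(x_j-t_j)_+^{\alpha-1}\,d\mathbf{t}_u$ with $\tilde f_u\in L_p([0,1]^u)$ for all $u\subseteq S$. The functions $\tilde f_u$ are uniquely determined (a.e.) by $f$, and $\mathcal{H}_{\alpha,s,p,q}$ denotes this space with the norm $\|f\|_{\alpha,s,p,q}=\big(\sum_{u\subseteq S}\Gamma(\alpha)^{-q|u|}\|\tilde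 f_u\|^q_{L_p}\big)^{1/q}$ (usual modification for $q=\infty$). Fractional discrepancy: for $\emptyset\ne u\subseteq S$ and $\mathbf{t}_u\in[0,1]^u$, $\Delta_\alpha(\mathbf{t}_u,u,P)=\alpha^{-|u|}\prod_{j\in u}(1-t_j)^\alpha-\frac1N\sum_{n=0}^{N-1}\prod_{j\in u}(x_{n,j}-t_j)_+^{\alpha-1}$, where $\mathbf{x}_n=(x_{n,1},\dots,x_{n,s})$, and $D^*_{\alpha,s,p',q'}(P)=\Big(\sum_{\emptyset\ne u\subseteq S}\big(\int_{[0,1]^u}|\Delta_\alpha(\mathbf{t}_u,u,P)|^{p'}d\mathbf{t}_u\big)^{q'/p'}\Big)^{1/q'}$ with the obvious modifications for $q'=\infty$. $e^{\mathrm{wor}}(Q_P,\mathcal{H}_{\alpha,s,p,q})=\sup\{|\int_{[0,1]^s}f-Q_P(f)|: f\in\mathcal{H}_{\alpha,s,p},\|f\|_{\alpha,s,p,q}\le1\}$. *)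

theory Defs
  imports "HOL-Analysis.Analysis" "HOL-Probability.Essential_Supremum"
begin

text \<open>Index set S = {1..s}; points of [0,1]^s are functions nat => real
  (only coordinates in S matter).\<close>

definition cube :: "nat \<Rightarrow> (nat \<Rightarrow> real) set" where
  "cube s = {x. \<forall>j\<in>{1..s}. x j \<in> {0..1}}"

text \<open>Lebesgue (Borel) measure on [0,1]^u, u a finite index set.
  For u = {} this is the one-point probability space, giving the stated conventions.\<close>
definition cube_measure :: "nat set \<Rightarrow> (nat \<Rightarrow> real) measure" where
  "cube_measure u = PiM u (\<lambda>_. restrict_space lborel {0..1::real})"

definition kern :: "real \<Rightarrow> real \<Rightarrow> real \<Rightarrow> real" where
  "kern \<alpha> x t = (if x > t then (x - t) powr (\<alpha> - 1) else 0)"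

definition enn_powr :: "ennreal \<Rightarrow> real \<Rightarrow> ennreal" where
  "enn_powr x r = (if x = \<infinity> then \<infinity> else ennreal (enn2real x powr r))"

definition conj_exp :: "ereal \<Rightarrow> ereal" where
  "conj_exp p = (if p = \<infinity> then 1 else if p = 1 then \<infinity>
                 else ereal (real_of_ereal p / (real_of_ereal p - 1)))"

definition Lp_norm :: "'a measure \<Rightarrow> ereal \<Rightarrow> ('a \<Rightarrow> real) \<Rightarrow> ennreal" where
  "Lp_norm M p g = (if p = \<infinity> then esssup M (\<lambda>x. ennreal \<bar>g x\<bar>)
     else enn_powr (\<integral>\<^sup>+ x. ennreal (\<bar>g x\<bar> powr real_of_ereal p) \<partial>M) (1 / real_of_ereal p))"

definition memLp :: "'a measure \<Rightarrow> ereal \<Rightarrow> ('a \<Rightarrow> real) \<Rightarrow> bool" where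
  "memLp M p g \<longleftrightarrow> g \<in> borel_measurable M \<and> Lp_norm M p g < \<infinity>"

definition represents ::
  "real \<Rightarrow> nat \<Rightarrow> ereal \<Rightarrow> (nat set \<Rightarrow> (nat \<Rightarrow> real) \<Rightarrow> real) \<Rightarrow> ((nat \<Rightarrow> real) \<Rightarrow> real) \<Rightarrow> bool" where
  "represents \<alpha> s p F f \<longleftrightarrow>
     (\<forall>u \<subseteq> {1..s}. memLp (cube_measure u) p (F u)) \<and>
     (\<forall>x \<in> cube s. f x = (\<Sum>u\<in>Pow {1..s}. Gamma \<alpha> powr (- real (card u)) *
        (\<integral> t. F u t * (\<Prod>j\<in>u. kern \<alpha> (x j) (t j)) \<partial>cube_measure u)))"

definition H_space :: "real \<Rightarrow> nat \<Rightarrow> ereal \<Rightarrow> ((nat \<Rightarrow> real) \<Rightarrow> real) set" where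
  "H_space \<alpha> s p = {f. \<exists>F. represents \<alpha> s p F f}"

definition rep_norm ::
  "real \<Rightarrow> nat \<Rightarrow> ereal \<Rightarrow> ereal \<Rightarrow> (nat set \<Rightarrow> (nat \<Rightarrow> real) \<Rightarrow> real) \<Rightarrow> ennreal" where
  "rep_norm \<alpha> s p q F =
     (let c = (\<lambda>u. ennreal (Gamma \<alpha> powr (- real (card u))) * Lp_norm (cube_measure u) p (F u))
      in if q = \<infinity> then Max (c ` Pow {1..s})
         else enn_powr (\<Sum>u\<in>Pow {1..s}. enn_powr (c u) (real_of_ereal q)) (1 / real_of_ereal q))"

text \<open>The norm of f in H_{alpha,s,p,q}; the representation is unique (a.e.), so
  this infimum is just the norm of the representation.\<close>
definition H_norm :: "real \<Rightarrow> nat \<Rightarrow> ereal \<Rightarrow> ereal \<Rightarrow> ((nat \<Rightarrow> real) \<Rightarrow> real) \<Rightarrow> ennreal" where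
  "H_norm \<alpha> s p q f = Inf {rep_norm \<alpha> s p q F | F. represents \<alpha> s p F f}"

definition QMC :: "nat \<Rightarrow> (nat \<Rightarrow> nat \<Rightarrow> real) \<Rightarrow> ((nat \<Rightarrow> real) \<Rightarrow> real) \<Rightarrow> real" where
  "QMC N x f = (1 / real N) * (\<Sum>n<N. f (x n))"

definition e_wor :: "real \<Rightarrow> nat \<Rightarrow> ereal \<Rightarrow> ereal \<Rightarrow> nat \<Rightarrow> (nat \<Rightarrow> nat \<Rightarrow> real) \<Rightarrow> ennreal" where
  "e_wor \<alpha> s p q N x = Sup {ennreal \<bar>(\<integral> y. f y \<partial>cube_measure {1..s}) - QMC N x f\<bar> | f.
       f \<in> H_space \<alpha> s p \<and> H_norm \<alpha> s p q f \<le> 1}"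

definition frac_disc_local :: "real \<Rightarrow> nat \<Rightarrow> (nat \<Rightarrow> nat \<Rightarrow> real) \<Rightarrow> nat set \<Rightarrow> (nat \<Rightarrow> real) \<Rightarrow> real" where
  "frac_disc_local \<alpha> N x u t = \<alpha> powr (- real (card u)) * (\<Prod>j\<in>u. (1 - t j) powr \<alpha>)
     - (1 / real N) * (\<Sum>n<N. \<Prod>j\<in>u. kern \<alpha> (x n j) (t j))"

definition frac_disc :: "real \<Rightarrow> nat \<Rightarrow> ereal \<Rightarrow> ereal \<Rightarrow> nat \<Rightarrow> (nat \<Rightarrow> nat \<Rightarrow> real) \<Rightarrow> ennreal" where
  "frac_disc \<alpha> s p' q' N x =
     (let c = (\<lambda>u. Lp_norm (cube_measure u) p' (frac_disc_local \<alpha> N x u))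
      in if q' = \<infinity> then Max (c ` (Pow {1..s} - {{}}))
         else enn_powr (\<Sum>u\<in>Pow {1..s} - {{}}. enn_powr (c u) (real_of_ereal q')) (1 / real_of_ereal q'))"

end

theory Submission
  imports Defs "HOL-Probability.Infinite_Product_Measure"
begin

text \<open>Substituting the representation of \<open>f\<close> and applying Fubini's theorem, the kernel
  product \<open>\<Prod>j\<in>u. (x j - t j)\<^sub>+ powr (\<alpha> - 1)\<close> integrates over \<open>x\<close> to
  \<open>\<alpha> powr -|u| * (\<Prod>j\<in>u. (1 - t j) powr \<alpha>)\<close>, whereas the quadrature rule evaluates it at the
  points. Hence the integration error of \<open>f\<close> is the sum over \<open>u\<close> of \<open>\<Gamma>(\<alpha>) powr -|u|\<close> times the
  integral of \<open>f\<^sub>u\<close> against the local discrepancy \<open>\<Delta>\<^sub>\<alpha>(\<cdot>, u, P)\<close>, an identity of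
  Hlawka--Zaremba type. Hoelder's inequality in \<open>L\<^sub>p([0,1]\<^sup>u)\<close>, followed by Hoelder's
  inequality in \<open>\<ell>\<^sub>q\<close> over the subsets \<open>u\<close>, bounds the error by the norm of \<open>f\<close> times the
  discrepancy. Both steps are sharp: taking for \<open>f\<^sub>u\<close> a norming function of \<open>\<Delta>\<^sub>\<alpha>(\<cdot>, u, P)\<close>
  in \<open>L\<^sub>p\<close>, scaled by a norming sequence of the norms of the \<open>\<Delta>\<^sub>\<alpha>(\<cdot>, u, P)\<close> in \<open>\<ell>\<^sub>q\<close>, gives
  equality. The hypothesis \<open>p > 1/\<alpha>\<close> is what puts the kernel into \<open>L\<^sub>p\<^sub>'\<close>, so that all these
  integrals exist.\<close>

section \<open>The kernel\<close>

lemma kern_nonneg: "0 \<le> kern \<alpha> x t"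
  unfolding kern_def by auto

lemma kern_eq_powr: "t \<le> x \<Longrightarrow> kern \<alpha> x t = (x - t) powr (\<alpha> - 1)"
  unfolding kern_def by auto

lemma kern_powr: "0 < r \<Longrightarrow> kern \<alpha> x t powr r = kern ((\<alpha> - 1) * r + 1) x t"
  unfolding kern_def by (auto simp: powr_powr)

lemma borel_measurable_kern [measurable]:
  assumes [measurable]: "f \<in> borel_measurable M" "g \<in> borel_measurable M"
  shows "(\<lambda>z. kern \<alpha> (f z) (g z)) \<in> borel_measurable M"
  unfolding kern_def by measurable

lemma has_integral_kern_fst:
  assumes "0 < a" "t \<le> b"
  shows "((\<lambda>x. kern a x t) has_integral (b - t) powr a / a) {t..b}"
proof -
  have "((\<lambda>z. z powr (a - 1)) has_integral (b - t) powr a / a) (cbox 0 (b - t))"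
    using has_integral_powr_from_0[of "a - 1" "b - t"] assms by simp
  from has_integral_affinity[OF this, of 1 "-t"]
  have "((\<lambda>x. (x - t) powr (a - 1)) has_integral (b - t) powr a / a) ((\<lambda>x. x + t) ` {0..b - t})"
    by simp
  moreover have "(\<lambda>x. x + t) ` {0..b - t} = {t..b}"
    by (auto simp: image_iff intro!: bexI[where x="_ - t"])
  ultimately show ?thesis
    using has_integral_cong[of "{t..b}" "\<lambda>x. kern a x t"] by (simp add: kern_eq_powr)
qed

lemma has_integral_kern_snd:
  assumes "0 < a" "0 \<le> y"
  shows "((\<lambda>t. kern a y t) has_integral y powr a / a) {0..y}"
proof -
  have "((\<lambda>z. z powr (a - 1)) has_integral y powr a / a) (cbox 0 y)"
    using has_integral_powr_from_0[of "a - 1" y] assms by simp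
  from has_integral_affinity[OF this, of "-1" y]
  have "((\<lambda>t. (y - t) powr (a - 1)) has_integral y powr a / a) ((\<lambda>t. y - t) ` {0..y})"
    by simp
  moreover have "(\<lambda>t. y - t) ` {0..y} = {0..y}"
    by (auto simp: image_iff intro!: bexI[where x="y - _"])
  ultimately show ?thesis
    using has_integral_cong[of "{0..y}" "\<lambda>t. kern a y t"] by (simp add: kern_eq_powr)
qed

lemma nn_integral_kern_fst:
  assumes "0 < a" "0 \<le> t" "t \<le> 1"
  shows "(\<integral>\<^sup>+x. ennreal (kern a x t) \<partial>restrict_space lborel {0..1}) = ennreal ((1 - t) powr a / a)"
proof -
  have "(\<integral>\<^sup>+x. ennreal (kern a x t) \<partial>restrict_space lborel {0..1})
      = (\<integral>\<^sup>+x. ennreal (kern a x t) * indicator {t..1} x \<partial>lborel)"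
    using assms by (subst nn_integral_restrict_space) (auto intro!: nn_integral_cong
        simp: kern_def split: split_indicator)
  also have "\<dots> = ennreal ((1 - t) powr a / a)"
    using assms by (intro nn_integral_has_integral_lebesgue' has_integral_kern_fst kern_nonneg)
  finally show ?thesis .
qed

lemma nn_integral_kern_snd:
  assumes "0 < a" "0 \<le> y" "y \<le> 1"
  shows "(\<integral>\<^sup>+t. ennreal (kern a y t) \<partial>restrict_space lborel {0..1}) = ennreal (y powr a / a)"
proof -
  have "(\<integral>\<^sup>+t. ennreal (kern a y t) \<partial>restrict_space lborel {0..1})
      = (\<integral>\<^sup>+t. ennreal (kern a y t) * indicator {0..y} t \<partial>lborel)"
    using assms by (subst nn_integral_restrict_space) (auto intro!: nn_integral_cong
        simp: kern_def split: split_indicator)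
  also have "\<dots> = ennreal (y powr a / a)"
    using assms by (intro nn_integral_has_integral_lebesgue' has_integral_kern_snd kern_nonneg)
  finally show ?thesis .
qed


section \<open>\<open>L\<^sub>p\<close> norms and Hoelder's inequality\<close>

lemma enn_powr_ennreal: "0 \<le> x \<Longrightarrow> enn_powr (ennreal x) r = ennreal (x powr r)"
  by (simp add: enn_powr_def)

lemma enn_powr_one: "enn_powr X 1 = X"
  by (cases X) (auto simp: enn_powr_def)

lemma enn_powr_eq_0_iff: "enn_powr X r = 0 \<longleftrightarrow> X = 0"
  by (cases X) (auto simp: enn_powr_def ennreal_eq_0_iff)

lemma enn_powr_less_top_iff: "enn_powr X r < \<infinity> \<longleftrightarrow> X < \<infinity>"
  by (cases "X = \<infinity>") (auto simp: enn_powr_def top.not_eq_extremum)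

lemma enn_powr_mono: "X \<le> Y \<Longrightarrow> 0 \<le> r \<Longrightarrow> enn_powr X r \<le> enn_powr Y r"
  by (cases X; cases Y) (auto simp: enn_powr_def top_unique intro!: ennreal_leI powr_mono2)

lemma Lp_norm_ereal: "Lp_norm M (ereal r) g = enn_powr (\<integral>\<^sup>+x. ennreal (\<bar>g x\<bar> powr r) \<partial>M) (1 / r)"
  by (simp add: Lp_norm_def)

lemma Lp_norm_one: "Lp_norm M 1 g = (\<integral>\<^sup>+x. ennreal \<bar>g x\<bar> \<partial>M)"
  using Lp_norm_ereal[of M 1 g] by (simp add: enn_powr_one one_ereal_def)

lemma Lp_norm_PInf: "Lp_norm M \<infinity> g = esssup M (\<lambda>x. ennreal \<bar>g x\<bar>)"
  by (simp add: Lp_norm_def)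

lemma Lp_norm_ereal_less_top_iff:
  "Lp_norm M (ereal r) g < \<infinity> \<longleftrightarrow> (\<integral>\<^sup>+x. ennreal (\<bar>g x\<bar> powr r) \<partial>M) < \<infinity>"
  unfolding Lp_norm_ereal enn_powr_less_top_iff ..

lemma Lp_norm_zero: "0 < r \<Longrightarrow> Lp_norm M (ereal r) (\<lambda>_. 0) = 0"
  by (simp add: Lp_norm_ereal enn_powr_def)

definition conjugate_exponents :: "ereal \<Rightarrow> ereal \<Rightarrow> bool" where
  "conjugate_exponents p p' \<longleftrightarrow> (p = \<infinity> \<and> p' = 1) \<or> (p = 1 \<and> p' = \<infinity>)
     \<or> (\<exists>r. p = ereal r \<and> 1 < r \<and> p' = ereal (r / (r - 1)))"

lemma conjugate_exponents_conj_exp: "1 \<le> p \<Longrightarrow> conjugate_exponents p (conj_exp p)"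
  unfolding conjugate_exponents_def conj_exp_def by (cases p) auto

lemma conjugate_exponents_sym: "conjugate_exponents p p' \<Longrightarrow> conjugate_exponents p' p"
  unfolding conjugate_exponents_def
proof (elim disjE exE conjE)
  fix r assume r: "p = ereal r" "1 < r" "p' = ereal (r / (r - 1))"
  have "1 < r / (r - 1)" "r / (r - 1) / (r / (r - 1) - 1) = r"
    using r(2) by (simp_all add: field_simps)
  then show "p' = \<infinity> \<and> p = 1 \<or> p' = 1 \<and> p = \<infinity>
      \<or> (\<exists>r. p' = ereal r \<and> 1 < r \<and> p = ereal (r / (r - 1)))"
    using r by (intro disjI2) (auto intro!: exI[of _ "r / (r - 1)"])
qed auto

lemma conjugate_exponents_ge_1:
  assumes "conjugate_exponents p p'"
  shows "1 \<le> p" "1 \<le> p'"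
proof -
  have *: "1 \<le> p" if "conjugate_exponents p p'" for p p'
    using that unfolding conjugate_exponents_def by (auto simp: one_ereal_def)
  show "1 \<le> p" "1 \<le> p'"
    using *[OF assms] *[OF conjugate_exponents_sym[OF assms]] .
qed

lemma conj_exp_gt_0:
  assumes "1 \<le> p"
  shows "0 < conj_exp p"
proof -
  have "1 \<le> conj_exp p"
    using conjugate_exponents_ge_1(2)[OF conjugate_exponents_conj_exp[OF assms]] .
  then show ?thesis
    by (cases "conj_exp p") auto
qed

lemma Lp_norm_Hoelder_PInf:
  assumes [measurable]: "f \<in> borel_measurable M" "g \<in> borel_measurable M"
  shows "(\<integral>\<^sup>+x. ennreal \<bar>f x * g x\<bar> \<partial>M) \<le> Lp_norm M \<infinity> f * Lp_norm M 1 g"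
proof -
  have "(\<integral>\<^sup>+x. ennreal \<bar>f x * g x\<bar> \<partial>M) = (\<integral>\<^sup>+x. ennreal \<bar>f x\<bar> * ennreal \<bar>g x\<bar> \<partial>M)"
    by (simp add: abs_mult ennreal_mult)
  also have "\<dots> \<le> (\<integral>\<^sup>+x. esssup M (\<lambda>x. ennreal \<bar>f x\<bar>) * ennreal \<bar>g x\<bar> \<partial>M)"
    using esssup_AE[of "\<lambda>x. ennreal \<bar>f x\<bar>" M]
    by (intro nn_integral_mono_AE) (auto elim!: eventually_mono intro: mult_right_mono)
  also have "\<dots> = esssup M (\<lambda>x. ennreal \<bar>f x\<bar>) * (\<integral>\<^sup>+x. ennreal \<bar>g x\<bar> \<partial>M)"
    by (rule nn_integral_cmult) measurable
  finally show ?thesis by (simp add: Lp_norm_one Lp_norm_PInf)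
qed

lemma AE_eq_0_of_nn_integral_powr_eq_0:
  assumes [measurable]: "h \<in> borel_measurable M" and "(\<integral>\<^sup>+x. ennreal (\<bar>h x\<bar> powr e) \<partial>M) = 0"
  shows "AE x in M. h x = 0"
proof -
  have "AE x in M. ennreal (\<bar>h x\<bar> powr e) = 0"
    using assms(2) by (subst (asm) nn_integral_0_iff_AE) auto
  then show ?thesis
    by eventually_elim (auto simp: ennreal_eq_0_iff)
qed

lemma Youngs_inequality_scaled:
  fixes u v a b r r' :: real
  assumes "1 < r" "1 < r'" "1 / r + 1 / r' = 1" "0 < a" "0 < b"
  shows "\<bar>u * v\<bar> \<le> a * b / (r * a powr r) * \<bar>u\<bar> powr r + a * b / (r' * b powr r') * \<bar>v\<bar> powr r'"
proof -
  have "(\<bar>u\<bar> / a) * (\<bar>v\<bar> / b) \<le> (\<bar>u\<bar> / a) powr r / r + (\<bar>v\<bar> / b) powr r' / r'"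
    using assms by (intro Youngs_inequality) auto
  also have "\<dots> = \<bar>u\<bar> powr r / (r * a powr r) + \<bar>v\<bar> powr r' / (r' * b powr r')"
    using assms(4,5) by (simp add: powr_divide mult.commute)
  finally show ?thesis
    using assms(4,5) by (simp add: abs_mult field_simps)
qed

lemma Lp_norm_Hoelder_real:
  assumes [measurable]: "f \<in> borel_measurable M" "g \<in> borel_measurable M"
    and r: "1 < r" and r': "r' = r / (r - 1)"
  shows "(\<integral>\<^sup>+x. ennreal \<bar>f x * g x\<bar> \<partial>M) \<le> Lp_norm M (ereal r) f * Lp_norm M (ereal r') g"
proof -
  have r'1: "1 < r'" and rr': "1 / r + 1 / r' = 1"
    using r unfolding r' by (simp_all add: field_simps)
  define A where "A = (\<integral>\<^sup>+x. ennreal (\<bar>f x\<bar> powr r) \<partial>M)"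
  define B where "B = (\<integral>\<^sup>+x. ennreal (\<bar>g x\<bar> powr r') \<partial>M)"
  have LA: "Lp_norm M (ereal r) f = enn_powr A (1 / r)"
    and LB: "Lp_norm M (ereal r') g = enn_powr B (1 / r')"
    unfolding A_def B_def Lp_norm_ereal by simp_all
  consider "A = 0 \<or> B = 0" | "A = \<infinity> \<or> B = \<infinity>" "A \<noteq> 0" "B \<noteq> 0"
    | A' B' where "A = ennreal A'" "0 < A'" "B = ennreal B'" "0 < B'"
    by (cases A; cases B) (auto simp: ennreal_eq_0_iff less_le)
  then show ?thesis
  proof cases
    case 1
    then have "AE x in M. f x * g x = 0"
      using AE_eq_0_of_nn_integral_powr_eq_0[of f M r] AE_eq_0_of_nn_integral_powr_eq_0[of g M r']
      unfolding A_def B_def by (auto elim: eventually_mono)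
    then have "(\<integral>\<^sup>+x. ennreal \<bar>f x * g x\<bar> \<partial>M) = 0"
      by (subst nn_integral_0_iff_AE) (auto elim!: eventually_mono)
    then show ?thesis by simp
  next
    case 2
    then have "Lp_norm M (ereal r) f * Lp_norm M (ereal r') g = \<infinity>"
      unfolding LA LB by (auto simp: enn_powr_eq_0_iff ennreal_mult_eq_top_iff enn_powr_def enn2real_eq_0_iff)
    then show ?thesis by simp
  next
    case (3 A' B')
    define a where "a = A' powr (1 / r)"
    define b where "b = B' powr (1 / r')"
    have a: "0 < a" "a powr r = A'" and b: "0 < b" "b powr r' = B'"
      using 3 r r'1 by (auto simp: a_def b_def powr_powr)
    define ca where "ca = a * b / (r * A')"
    define cb where "cb = a * b / (r' * B')"
    have "(\<integral>\<^sup>+x. ennreal \<bar>f x * g x\<bar> \<partial>M)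
        \<le> (\<integral>\<^sup>+x. ennreal ca * ennreal (\<bar>f x\<bar> powr r) + ennreal cb * ennreal (\<bar>g x\<bar> powr r') \<partial>M)"
      using Youngs_inequality_scaled[OF r r'1 rr' a(1) b(1)] a b 3 r r'1
      by (intro nn_integral_mono) (simp add: ennreal_leI ca_def cb_def flip: ennreal_mult ennreal_plus)
    also have "\<dots> = ennreal ca * A + ennreal cb * B"
      unfolding A_def B_def by (subst nn_integral_add) (auto simp: nn_integral_cmult)
    also have "\<dots> = ennreal (a * b)"
      using a b 3 r r'1 rr' by (simp add: ca_def cb_def field_simps flip: ennreal_mult ennreal_plus)
    also have "\<dots> = Lp_norm M (ereal r) f * Lp_norm M (ereal r') g"
      unfolding LA LB 3 using 3 a b by (simp add: enn_powr_ennreal a_def b_def ennreal_mult)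
    finally show ?thesis .
  qed
qed

lemma Lp_norm_Hoelder:
  assumes "conjugate_exponents p p'" "f \<in> borel_measurable M" "g \<in> borel_measurable M"
  shows "(\<integral>\<^sup>+x. ennreal \<bar>f x * g x\<bar> \<partial>M) \<le> Lp_norm M p f * Lp_norm M p' g"
  using assms(1) unfolding conjugate_exponents_def
proof (elim disjE exE conjE)
  assume "p = \<infinity>" "p' = 1"
  then show ?thesis using Lp_norm_Hoelder_PInf[OF assms(2,3)] by simp
next
  assume "p = 1" "p' = \<infinity>"
  then show ?thesis using Lp_norm_Hoelder_PInf[OF assms(3,2)] by (simp add: mult.commute)
next
  fix r assume "p = ereal r" "1 < r" "p' = ereal (r / (r - 1))"
  then show ?thesis using Lp_norm_Hoelder_real[OF assms(2,3)] by simp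
qed

lemma
  assumes "conjugate_exponents p p'" "f \<in> borel_measurable M" "g \<in> borel_measurable M"
    and "Lp_norm M p f < \<infinity>" "Lp_norm M p' g < \<infinity>"
  shows integrable_mult_Lp_norm: "integrable M (\<lambda>x. f x * g x)"
    and abs_integral_mult_le_Lp_norm: "ennreal \<bar>\<integral>x. f x * g x \<partial>M\<bar> \<le> Lp_norm M p f * Lp_norm M p' g"
proof -
  have Hoelder: "(\<integral>\<^sup>+x. ennreal \<bar>f x * g x\<bar> \<partial>M) \<le> Lp_norm M p f * Lp_norm M p' g"
    by (rule Lp_norm_Hoelder[OF assms(1-3)])
  also have "\<dots> < \<infinity>" using assms(4,5) by (simp add: ennreal_mult_less_top)
  finally show int: "integrable M (\<lambda>x. f x * g x)"
    using assms(2,3) by (intro integrableI_bounded) auto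
  have "ennreal \<bar>\<integral>x. f x * g x \<partial>M\<bar> \<le> (\<integral>\<^sup>+x. ennreal \<bar>f x * g x\<bar> \<partial>M)"
    using integral_norm_bound_ennreal[OF int] by simp
  with Hoelder show "ennreal \<bar>\<integral>x. f x * g x \<partial>M\<bar> \<le> Lp_norm M p f * Lp_norm M p' g"
    by simp
qed

lemma Lp_norm_dual_attained_PInf:
  assumes g [measurable]: "g \<in> borel_measurable M" and fin: "Lp_norm M 1 g < \<infinity>"
  shows "\<exists>f. f \<in> borel_measurable M \<and> Lp_norm M \<infinity> f \<le> 1 \<and> integrable M (\<lambda>x. f x * g x)
     \<and> (\<integral>x. f x * g x \<partial>M) = enn2real (Lp_norm M 1 g)"
proof (intro exI conjI)
  have sgn_mult: "(\<lambda>x. sgn (g x) * g x) = (\<lambda>x. \<bar>g x\<bar>)" by (auto simp: sgn_real_def)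
  show "(\<lambda>x. sgn (g x)) \<in> borel_measurable M" by measurable
  show "Lp_norm M \<infinity> (\<lambda>x. sgn (g x)) \<le> 1"
    unfolding Lp_norm_PInf by (rule esssup_I) (auto simp: sgn_real_def)
  show "integrable M (\<lambda>x. sgn (g x) * g x)"
    unfolding sgn_mult using fin by (intro integrableI_bounded) (auto simp: Lp_norm_one)
  show "(\<integral>x. sgn (g x) * g x \<partial>M) = enn2real (Lp_norm M 1 g)"
    unfolding sgn_mult Lp_norm_one by (rule integral_eq_nn_integral) auto
qed

lemma sgn_mult_abs_powr: "sgn y * \<bar>y\<bar> powr e * y = \<bar>y\<bar> powr (e + 1)" for y e :: real
  by (cases "y = 0") (auto simp: sgn_real_def powr_add abs_if)

lemma Lp_norm_dual_function_real:
  assumes g [measurable]: "g \<in> borel_measurable M" and r: "1 < r" and r': "r' = r / (r - 1)"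
    and B: "(\<integral>\<^sup>+x. ennreal (\<bar>g x\<bar> powr r') \<partial>M) = ennreal B'" "0 < B'"
  defines "b \<equiv> B' powr (1 / r')"
  defines "f \<equiv> \<lambda>x. sgn (g x) * \<bar>g x\<bar> powr (r' - 1) / b powr (r' - 1)"
  shows "Lp_norm M (ereal r) f \<le> 1" "integrable M (\<lambda>x. f x * g x)" "(\<integral>x. f x * g x \<partial>M) = b"
proof -
  have r'1: "1 < r'" and rr': "(r' - 1) * r = r'"
    using r unfolding r' by (simp_all add: field_simps)
  have b: "0 < b" "b powr r' = B'"
    using B(2) r'1 by (auto simp: b_def powr_powr)
  have f_powr: "\<bar>f x\<bar> powr r = \<bar>g x\<bar> powr r' / B'" for x
  proof -
    have "\<bar>f x\<bar> powr r = (\<bar>g x\<bar> powr (r' - 1)) powr r / (b powr (r' - 1)) powr r"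
      unfolding f_def using b by (simp add: sgn_real_def abs_mult powr_divide)
    also have "\<dots> = \<bar>g x\<bar> powr r' / B'"
      using b by (simp add: powr_powr rr')
    finally show ?thesis .
  qed
  have fg: "f x * g x = \<bar>g x\<bar> powr r' / b powr (r' - 1)" for x
    using sgn_mult_abs_powr[of "g x" "r' - 1"] by (simp add: f_def)
  have "(\<integral>\<^sup>+x. ennreal (\<bar>f x\<bar> powr r) \<partial>M) = (\<integral>\<^sup>+x. ennreal (1 / B') * ennreal (\<bar>g x\<bar> powr r') \<partial>M)"
    unfolding f_powr using B(2) by (intro nn_integral_cong) (simp flip: ennreal_mult)
  also have "\<dots> = 1"
    using B by (subst nn_integral_cmult) (simp_all flip: ennreal_mult)
  finally show "Lp_norm M (ereal r) f \<le> 1"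
    by (simp add: Lp_norm_ereal enn_powr_def)
  have "(\<integral>\<^sup>+x. ennreal (f x * g x) \<partial>M)
      = (\<integral>\<^sup>+x. ennreal (\<bar>g x\<bar> powr r') * ennreal (1 / b powr (r' - 1)) \<partial>M)"
    unfolding fg using b by (intro nn_integral_cong) (simp flip: ennreal_mult)
  also have "\<dots> = ennreal (B' / b powr (r' - 1))"
    using B b by (subst nn_integral_multc) (simp_all flip: ennreal_mult)
  finally have nn_fg: "(\<integral>\<^sup>+x. ennreal (f x * g x) \<partial>M) = ennreal (B' / b powr (r' - 1))" .
  have fg_nonneg: "0 \<le> f x * g x" for x
    unfolding fg using b by simp
  show "integrable M (\<lambda>x. f x * g x)"
    using nn_fg fg_nonneg unfolding f_def by (intro integrableI_nonneg) auto
  have "(\<integral>x. f x * g x \<partial>M) = B' / b powr (r' - 1)"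
    using fg_nonneg nn_fg b B(2) unfolding f_def by (subst integral_eq_nn_integral) auto
  also have "\<dots> = b"
    using b by (simp flip: b(2) add: powr_diff)
  finally show "(\<integral>x. f x * g x \<partial>M) = b" .
qed

lemma Lp_norm_dual_attained_real:
  assumes g [measurable]: "g \<in> borel_measurable M" and r: "1 < r" and r': "r' = r / (r - 1)"
    and fin: "Lp_norm M (ereal r') g < \<infinity>"
  shows "\<exists>f. f \<in> borel_measurable M \<and> Lp_norm M (ereal r) f \<le> 1 \<and> integrable M (\<lambda>x. f x * g x)
     \<and> (\<integral>x. f x * g x \<partial>M) = enn2real (Lp_norm M (ereal r') g)"
proof -
  define B where "B = (\<integral>\<^sup>+x. ennreal (\<bar>g x\<bar> powr r') \<partial>M)"
  have LB: "Lp_norm M (ereal r') g = enn_powr B (1 / r')"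
    unfolding B_def Lp_norm_ereal ..
  have "B < \<infinity>"
    using fin unfolding LB enn_powr_less_top_iff .
  then consider "B = 0" | B' where "B = ennreal B'" "0 < B'"
    by (cases B) (auto simp: less_le)
  then show ?thesis
  proof cases
    case 1
    then show ?thesis
      using r by (intro exI[of _ "\<lambda>_. 0"]) (simp add: LB Lp_norm_zero enn_powr_def)
  next
    case (2 B')
    then show ?thesis
      using Lp_norm_dual_function_real[OF g r r', of B'] unfolding LB B_def
      by (intro exI[of _ "\<lambda>x. sgn (g x) * \<bar>g x\<bar> powr (r' - 1) / (B' powr (1 / r')) powr (r' - 1)"])
        (auto simp: enn_powr_def)
  qed
qed

text \<open>The case \<open>p = 1\<close> is excluded: the \<open>L\<^sub>\<infinity>\<close> norm need not be attained.\<close>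

lemma Lp_norm_dual_attained:
  assumes "conjugate_exponents p p'" "p \<noteq> 1" "g \<in> borel_measurable M" "Lp_norm M p' g < \<infinity>"
  shows "\<exists>f. f \<in> borel_measurable M \<and> Lp_norm M p f \<le> 1 \<and> integrable M (\<lambda>x. f x * g x)
     \<and> (\<integral>x. f x * g x \<partial>M) = enn2real (Lp_norm M p' g)"
  using assms(1,2) unfolding conjugate_exponents_def
proof (elim disjE exE conjE)
  assume "p = \<infinity>" "p' = 1"
  then show ?thesis using Lp_norm_dual_attained_PInf[OF assms(3)] assms(4) by simp
next
  fix r assume "p = ereal r" "1 < r" "p' = ereal (r / (r - 1))"
  then show ?thesis using Lp_norm_dual_attained_real[OF assms(3), of r] assms(4) by simp
qed simp

lemma Lp_norm_mono:
  assumes "\<And>x. x \<in> space M \<Longrightarrow> \<bar>f x\<bar> \<le> \<bar>g x\<bar>" "f \<in> borel_measurable M" "0 < p"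
  shows "Lp_norm M p f \<le> Lp_norm M p g"
proof (cases p)
  case PInf
  then show ?thesis
    unfolding PInf Lp_norm_PInf using assms(1,2) by (intro esssup_AE_mono) (auto intro!: AE_I2 ennreal_leI)
next
  case (real r)
  with assms(3) have "0 < r" by simp
  then show ?thesis
    unfolding real Lp_norm_ereal using assms(1)
    by (intro enn_powr_mono nn_integral_mono ennreal_leI powr_mono2) auto
qed (use assms in simp)

lemma Lp_norm_cmult_le:
  assumes "0 < p" "g \<in> borel_measurable M"
  shows "Lp_norm M p (\<lambda>x. c * g x) \<le> ennreal \<bar>c\<bar> * Lp_norm M p g"
proof (cases p)
  case PInf
  then show ?thesis
    unfolding PInf Lp_norm_PInf using esssup_AE[of "\<lambda>x. ennreal \<bar>g x\<bar>" M] assms(2)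
    by (intro esssup_I) (auto elim!: eventually_mono simp: abs_mult ennreal_mult intro!: mult_left_mono)
next
  case (real r)
  then have r: "0 < r" and p_r: "p = ereal r" using assms(1) by simp_all
  define X where "X = (\<integral>\<^sup>+x. ennreal (\<bar>g x\<bar> powr r) \<partial>M)"
  have "(\<integral>\<^sup>+x. ennreal (\<bar>c * g x\<bar> powr r) \<partial>M)
      = (\<integral>\<^sup>+x. ennreal (\<bar>c\<bar> powr r) * ennreal (\<bar>g x\<bar> powr r) \<partial>M)"
    by (simp add: abs_mult powr_mult ennreal_mult)
  also have "\<dots> = ennreal (\<bar>c\<bar> powr r) * X"
    unfolding X_def using assms(2) by (intro nn_integral_cmult) measurable
  finally have eq: "Lp_norm M p (\<lambda>x. c * g x) = enn_powr (ennreal (\<bar>c\<bar> powr r) * X) (1 / r)"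
    unfolding p_r Lp_norm_ereal by simp
  show ?thesis
  proof (cases X)
    case (real x)
    then show ?thesis
      unfolding eq using r by (simp add: p_r Lp_norm_ereal X_def[symmetric] enn_powr_def
          powr_mult powr_powr flip: ennreal_mult)
  next
    case top
    then show ?thesis
      unfolding eq by (cases "c = 0") (auto simp: p_r Lp_norm_ereal X_def[symmetric] enn_powr_def
          ennreal_mult_top)
  qed
qed (use assms in simp)

lemma abs_add_powr_le:
  fixes a b r :: real
  assumes "0 \<le> r"
  shows "\<bar>a + b\<bar> powr r \<le> 2 powr r * (\<bar>a\<bar> powr r + \<bar>b\<bar> powr r)"
proof -
  have "\<bar>a + b\<bar> powr r \<le> (2 * max \<bar>a\<bar> \<bar>b\<bar>) powr r"
    using assms by (intro powr_mono2) auto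
  also have "\<dots> = 2 powr r * max \<bar>a\<bar> \<bar>b\<bar> powr r"
    by (simp add: powr_mult)
  also have "max \<bar>a\<bar> \<bar>b\<bar> powr r \<le> \<bar>a\<bar> powr r + \<bar>b\<bar> powr r"
    by (simp add: max_def)
  finally show ?thesis by simp
qed

lemma Lp_norm_add_less_top:
  assumes r: "0 < r" and [measurable]: "f \<in> borel_measurable M" "g \<in> borel_measurable M"
    and "Lp_norm M (ereal r) f < \<infinity>" "Lp_norm M (ereal r) g < \<infinity>"
  shows "Lp_norm M (ereal r) (\<lambda>x. f x + g x) < \<infinity>"
proof -
  have "(\<integral>\<^sup>+x. ennreal (\<bar>f x + g x\<bar> powr r) \<partial>M)
      \<le> (\<integral>\<^sup>+x. ennreal (2 powr r) * ennreal (\<bar>f x\<bar> powr r) + ennreal (2 powr r) * ennreal (\<bar>g x\<bar> powr r) \<partial>M)"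
    using r by (intro nn_integral_mono)
      (auto simp: distrib_left[symmetric] intro!: ennreal_leI abs_add_powr_le simp flip: ennreal_mult ennreal_plus)
  also have "\<dots> = ennreal (2 powr r) * (\<integral>\<^sup>+x. ennreal (\<bar>f x\<bar> powr r) \<partial>M)
      + ennreal (2 powr r) * (\<integral>\<^sup>+x. ennreal (\<bar>g x\<bar> powr r) \<partial>M)"
    by (simp add: nn_integral_add nn_integral_cmult)
  also have "\<dots> < \<infinity>"
    using assms(4,5) unfolding Lp_norm_ereal_less_top_iff by (simp add: ennreal_mult_less_top)
  finally show ?thesis
    unfolding Lp_norm_ereal_less_top_iff .
qed

lemma Lp_norm_sum_less_top:
  assumes r: "0 < r" and "finite I" and "\<And>i. i \<in> I \<Longrightarrow> f i \<in> borel_measurable M"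
    and "\<And>i. i \<in> I \<Longrightarrow> Lp_norm M (ereal r) (f i) < \<infinity>"
  shows "Lp_norm M (ereal r) (\<lambda>x. \<Sum>i\<in>I. f i x) < \<infinity>"
  using assms(2-4)
proof (induction I rule: finite_induct)
  case empty
  then show ?case using r by (simp add: Lp_norm_ereal enn_powr_def)
next
  case (insert i I)
  then show ?case
    unfolding sum.insert[OF insert.hyps] by (intro Lp_norm_add_less_top[OF r] borel_measurable_sum) auto
qed

lemma Lp_norm_bounded_less_top:
  assumes "finite_measure M" "0 < p" "g \<in> borel_measurable M" "\<And>x. x \<in> space M \<Longrightarrow> \<bar>g x\<bar> \<le> C"
  shows "Lp_norm M p g < \<infinity>"
proof (cases p)
  case PInf
  have "esssup M (\<lambda>x. ennreal \<bar>g x\<bar>) \<le> ennreal C"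
    using assms(3,4) by (intro esssup_I) (auto intro!: AE_I2 ennreal_leI)
  then show ?thesis
    unfolding PInf Lp_norm_PInf using le_less_trans by fastforce
next
  case (real r)
  interpret finite_measure M by fact
  have "(\<integral>\<^sup>+x. ennreal (\<bar>g x\<bar> powr r) \<partial>M) \<le> (\<integral>\<^sup>+x. ennreal (\<bar>C\<bar> powr r) \<partial>M)"
    using assms(2,4) real by (intro nn_integral_mono ennreal_leI powr_mono2) (auto intro: order_trans[OF _ abs_ge_self])
  also have "\<dots> < \<infinity>"
    using emeasure_finite[of "space M"] by (simp add: ennreal_mult_eq_top_iff less_top[symmetric])
  finally show ?thesis
    unfolding real Lp_norm_ereal_less_top_iff .
qed (use assms in simp)

lemma integrable_of_Lp_norm_less_top:
  assumes "prob_space M" "1 \<le> p" "f \<in> borel_measurable M" "Lp_norm M p f < \<infinity>"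
  shows "integrable M f"
proof -
  have "Lp_norm M (conj_exp p) (\<lambda>_. 1) < \<infinity>"
    using assms(1) conj_exp_gt_0[OF assms(2)]
    by (intro Lp_norm_bounded_less_top[where C = 1]) (auto simp: prob_space_def)
  then show ?thesis
    using integrable_mult_Lp_norm[OF conjugate_exponents_conj_exp[OF assms(2)] assms(3) _ assms(4),
        of "\<lambda>_. 1"]
    by simp
qed

section \<open>Finite sequences\<close>

lemma Lp_norm_count_space_ereal:
  "finite U \<Longrightarrow> Lp_norm (count_space U) (ereal r) c = enn_powr (\<Sum>u\<in>U. ennreal (\<bar>c u\<bar> powr r)) (1 / r)"
  by (simp add: Lp_norm_ereal nn_integral_count_space_finite)

lemma Lp_norm_count_space_PInf:
  assumes "finite U" "U \<noteq> {}"
  shows "Lp_norm (count_space U) \<infinity> c = Max ((\<lambda>u. ennreal \<bar>c u\<bar>) ` U)"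
proof -
  have "Lp_norm (count_space U) \<infinity> c = Inf {z. \<forall>u\<in>U. ennreal \<bar>c u\<bar> \<le> z}"
    unfolding Lp_norm_PInf by (subst esssup_eq_AE) (auto simp: AE_count_space)
  also have "\<dots> = Max ((\<lambda>u. ennreal \<bar>c u\<bar>) ` U)"
    using assms by (intro antisym Inf_lower Inf_greatest) auto
  finally show ?thesis .
qed

lemma Lp_norm_count_space_less_top:
  assumes "finite U" "U \<noteq> {}" "0 < q"
  shows "Lp_norm (count_space U) q c < \<infinity>"
proof (cases q)
  case PInf
  have "Max ((\<lambda>u. ennreal \<bar>c u\<bar>) ` U) \<in> (\<lambda>u. ennreal \<bar>c u\<bar>) ` U"
    using assms by (intro Max_in) auto
  then show ?thesis
    unfolding PInf Lp_norm_count_space_PInf[OF assms(1,2)] by auto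
next
  case (real r)
  then show ?thesis
    unfolding real Lp_norm_count_space_ereal[OF assms(1)]
    by (simp add: sum_ennreal enn_powr_ennreal sum_nonneg)
qed (use assms in simp)

lemma Lp_norm_count_space_subset:
  assumes "finite U" "V \<subseteq> U" "V \<noteq> {}" "\<And>u. u \<in> U - V \<Longrightarrow> c u = 0" "0 < q"
  shows "Lp_norm (count_space U) q c = Lp_norm (count_space V) q c"
proof -
  have V: "finite V" "U \<noteq> {}"
    using assms(1-3) finite_subset by auto
  show ?thesis
  proof (cases q)
    case PInf
    have "Max ((\<lambda>u. ennreal \<bar>c u\<bar>) ` U) \<le> Max ((\<lambda>u. ennreal \<bar>c u\<bar>) ` V)"
    proof (rule Max.boundedI)
      fix z assume "z \<in> (\<lambda>u. ennreal \<bar>c u\<bar>) ` U"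
      then obtain u where u: "u \<in> U" "z = ennreal \<bar>c u\<bar>" by auto
      then show "z \<le> Max ((\<lambda>u. ennreal \<bar>c u\<bar>) ` V)"
        using V assms(4)[of u] by (cases "u \<in> V") (auto intro: Max_ge)
    qed (use assms(1) V in auto)
    moreover have "Max ((\<lambda>u. ennreal \<bar>c u\<bar>) ` V) \<le> Max ((\<lambda>u. ennreal \<bar>c u\<bar>) ` U)"
      using assms(1-3) by (intro Max_mono) auto
    ultimately show ?thesis
      unfolding PInf Lp_norm_count_space_PInf[OF assms(1) V(2)] Lp_norm_count_space_PInf[OF V(1) assms(3)]
      by (rule antisym)
  next
    case (real r)
    have "(\<Sum>u\<in>U. ennreal (\<bar>c u\<bar> powr r)) = (\<Sum>u\<in>V. ennreal (\<bar>c u\<bar> powr r))"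
      using assms(1,2,4) by (intro sum.mono_neutral_right) auto
    then show ?thesis
      unfolding real Lp_norm_count_space_ereal[OF assms(1)] Lp_norm_count_space_ereal[OF V(1)] by simp
  qed (use assms in simp)
qed

lemma abs_sum_mult_le_Lp_norm_count_space:
  assumes "conjugate_exponents q q'" "finite U"
  shows "ennreal \<bar>\<Sum>u\<in>U. w u * a u\<bar> \<le> Lp_norm (count_space U) q w * Lp_norm (count_space U) q' a"
proof -
  have "ennreal \<bar>\<Sum>u\<in>U. w u * a u\<bar> \<le> ennreal (\<Sum>u\<in>U. \<bar>w u * a u\<bar>)"
    by (intro ennreal_leI sum_abs)
  also have "\<dots> = (\<integral>\<^sup>+u. ennreal \<bar>w u * a u\<bar> \<partial>count_space U)"
    using assms(2) by (simp add: nn_integral_count_space_finite sum_ennreal)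
  also have "\<dots> \<le> Lp_norm (count_space U) q w * Lp_norm (count_space U) q' a"
    by (rule Lp_norm_Hoelder[OF assms(1)]) auto
  finally show ?thesis .
qed

text \<open>On a finite index set the dual norm is attained also for \<open>q = 1\<close>, by a unit vector.\<close>

lemma Lp_norm_count_space_dual_attained:
  assumes "conjugate_exponents q q'" "finite U" "U \<noteq> {}"
  obtains w where "Lp_norm (count_space U) q w \<le> 1"
    "(\<Sum>u\<in>U. w u * a u) = enn2real (Lp_norm (count_space U) q' a)"
proof (cases "q = 1")
  case True
  then have q': "q' = \<infinity>"
    using assms(1) unfolding conjugate_exponents_def by auto
  have "Max ((\<lambda>u. ennreal \<bar>a u\<bar>) ` U) \<in> (\<lambda>u. ennreal \<bar>a u\<bar>) ` U"
    using assms(2,3) by (intro Max_in) auto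
  then obtain u0 where u0: "u0 \<in> U" "ennreal \<bar>a u0\<bar> = Max ((\<lambda>u. ennreal \<bar>a u\<bar>) ` U)"
    by force
  define w where "w u = (if u = u0 then sgn (a u0) else 0)" for u
  have "Lp_norm (count_space U) q w = ennreal \<bar>w u0\<bar>"
    unfolding True Lp_norm_one using assms(2) u0(1)
    by (simp add: nn_integral_count_space_finite sum.remove[of _ u0] w_def)
  also have "\<dots> \<le> 1"
    by (auto simp: w_def sgn_real_def)
  finally have "Lp_norm (count_space U) q w \<le> 1" .
  moreover have "(\<Sum>u\<in>U. w u * a u) = \<bar>a u0\<bar>"
    using assms(2) u0(1) by (simp add: sum.remove[of _ u0] w_def sgn_real_def)
  then have "(\<Sum>u\<in>U. w u * a u) = enn2real (Lp_norm (count_space U) q' a)"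
    unfolding q' Lp_norm_count_space_PInf[OF assms(2,3)] u0(2)[symmetric] by simp
  ultimately show ?thesis by (rule that)
next
  case False
  have "0 < q'"
    using conjugate_exponents_ge_1(2)[OF assms(1)] by (cases q') auto
  then obtain w where "Lp_norm (count_space U) q w \<le> 1"
    "(\<integral>u. w u * a u \<partial>count_space U) = enn2real (Lp_norm (count_space U) q' a)"
    using Lp_norm_dual_attained[OF assms(1) False, of a "count_space U"]
      Lp_norm_count_space_less_top[OF assms(2,3)] by auto
  then show ?thesis
    using assms(2) that by (auto simp: lebesgue_integral_count_space_finite)
qed

text \<open>The left-hand side is the form in which \<open>rep_norm\<close> and \<open>frac_disc\<close> are defined.\<close>

lemma Max_or_enn_powr_sum_eq_Lp_norm_count_space:
  assumes "finite V" "V \<noteq> {}" "0 < q" "\<And>u. u \<in> V \<Longrightarrow> c u < \<infinity>"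
  shows "(if q = \<infinity> then Max (c ` V)
      else enn_powr (\<Sum>u\<in>V. enn_powr (c u) (real_of_ereal q)) (1 / real_of_ereal q))
    = Lp_norm (count_space V) q (\<lambda>u. enn2real (c u))"
proof (cases q)
  case PInf
  have "c ` V = (\<lambda>u. ennreal \<bar>enn2real (c u)\<bar>) ` V"
    using assms(4) by (intro image_cong refl) (simp add: ennreal_enn2real_if less_top[symmetric])
  then show ?thesis
    unfolding PInf Lp_norm_count_space_PInf[OF assms(1,2)] by simp
next
  case (real r)
  have "(\<Sum>u\<in>V. enn_powr (c u) r) = (\<Sum>u\<in>V. ennreal (\<bar>enn2real (c u)\<bar> powr r))"
    using assms(4) by (intro sum.cong refl) (auto simp: enn_powr_def less_top[symmetric])
  then show ?thesis
    unfolding real Lp_norm_count_space_ereal[OF assms(1)] by simp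
qed (use assms in simp)

section \<open>Kernel integrals over the unit cube\<close>

lemma prob_space_unit_interval: "prob_space (restrict_space lborel {0..1::real})"
  by (intro prob_spaceI) (simp add: space_restrict_space emeasure_restrict_space)

lemma product_sigma_finite_unit_interval:
  "product_sigma_finite (\<lambda>_::nat. restrict_space lborel {0..1::real})"
  unfolding product_sigma_finite_def using prob_space_unit_interval prob_space_imp_sigma_finite by blast

lemma prob_space_cube_measure: "prob_space (cube_measure u)"
  unfolding cube_measure_def by (intro prob_space_PiM prob_space_unit_interval)

lemma pair_sigma_finite_cube_measure: "pair_sigma_finite (cube_measure u) (cube_measure v)"
  unfolding pair_sigma_finite_def using prob_space_cube_measure prob_space_imp_sigma_finite by blast

lemma space_cube_measure: "space (cube_measure u) = PiE u (\<lambda>_. {0..1})"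
  unfolding cube_measure_def by (simp add: space_PiM space_restrict_space)

lemma borel_measurable_cube_component:
  assumes "j \<in> u"
  shows "(\<lambda>t. t j) \<in> borel_measurable (cube_measure u)"
proof -
  have "(\<lambda>t. t j) \<in> measurable (cube_measure u) (restrict_space lborel {0..1})"
    unfolding cube_measure_def using assms by (rule measurable_component_singleton)
  moreover have "(\<lambda>z::real. z) \<in> borel_measurable (restrict_space lborel {0..1})"
    by (intro measurable_restrict_space1) simp
  ultimately show ?thesis
    by (rule measurable_compose)
qed

definition kern_prod :: "real \<Rightarrow> nat set \<Rightarrow> (nat \<Rightarrow> real) \<Rightarrow> (nat \<Rightarrow> real) \<Rightarrow> real" where
  "kern_prod \<alpha> u y t = (\<Prod>j\<in>u. kern \<alpha> (y j) (t j))"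

definition kern_integral :: "real \<Rightarrow> nat set \<Rightarrow> (nat \<Rightarrow> real) \<Rightarrow> real" where
  "kern_integral \<alpha> u t = \<alpha> powr (- real (card u)) * (\<Prod>j\<in>u. (1 - t j) powr \<alpha>)"

lemma frac_disc_local_eq:
  "frac_disc_local \<alpha> N x u t = kern_integral \<alpha> u t - (1 / real N) * (\<Sum>n<N. kern_prod \<alpha> u (x n) t)"
  by (simp add: frac_disc_local_def kern_integral_def kern_prod_def)

lemma kern_prod_nonneg: "0 \<le> kern_prod \<alpha> u y t"
  unfolding kern_prod_def by (simp add: prod_nonneg kern_nonneg)

lemma borel_measurable_kern_prod:
  assumes "\<And>j. j \<in> u \<Longrightarrow> (\<lambda>z. a z j) \<in> borel_measurable M"
    and "\<And>j. j \<in> u \<Longrightarrow> (\<lambda>z. b z j) \<in> borel_measurable M"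
  shows "(\<lambda>z. kern_prod \<alpha> u (a z) (b z)) \<in> borel_measurable M"
  unfolding kern_prod_def using assms by (intro borel_measurable_prod borel_measurable_kern) auto

lemma borel_measurable_kern_prod_snd: "kern_prod \<alpha> u y \<in> borel_measurable (cube_measure u)"
  using borel_measurable_kern_prod[of u "\<lambda>_. y" "cube_measure u" "\<lambda>t. t"]
  by (simp add: borel_measurable_cube_component)

lemma borel_measurable_kern_prod_fst:
  "u \<subseteq> S \<Longrightarrow> (\<lambda>y. kern_prod \<alpha> u y t) \<in> borel_measurable (cube_measure S)"
  by (intro borel_measurable_kern_prod borel_measurable_cube_component) auto

lemma borel_measurable_kern_integral: "kern_integral \<alpha> u \<in> borel_measurable (cube_measure u)"
  unfolding kern_integral_def
  by (intro borel_measurable_times borel_measurable_const borel_measurable_prod powr_real_measurable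
      borel_measurable_diff borel_measurable_cube_component) auto

lemma abs_kern_integral_le:
  assumes "0 < \<alpha>" "t \<in> space (cube_measure u)"
  shows "\<bar>kern_integral \<alpha> u t\<bar> \<le> \<alpha> powr (- real (card u))"
proof -
  have "0 \<le> (\<Prod>j\<in>u. (1 - t j) powr \<alpha>)" "(\<Prod>j\<in>u. (1 - t j) powr \<alpha>) \<le> 1"
    using assms by (auto simp: space_cube_measure PiE_iff prod_nonneg intro!: prod_le_1 powr_le1)
  then show ?thesis
    unfolding kern_integral_def by (simp add: abs_mult mult_left_le)
qed

lemma nn_integral_kern_prod_fst:
  assumes "finite S" "u \<subseteq> S" "0 < \<alpha>" "\<And>j. j \<in> u \<Longrightarrow> t j \<in> {0..1}"
  shows "(\<integral>\<^sup>+y. ennreal (kern_prod \<alpha> u y t) \<partial>cube_measure S) = ennreal (kern_integral \<alpha> u t)"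
proof -
  interpret product_sigma_finite "\<lambda>_::nat. restrict_space lborel {0..1::real}"
    by (rule product_sigma_finite_unit_interval)
  define g where "g j z = (if j \<in> u then ennreal (kern \<alpha> z (t j)) else 1)" for j z
  have "(\<integral>\<^sup>+y. ennreal (kern_prod \<alpha> u y t) \<partial>cube_measure S)
      = (\<integral>\<^sup>+y. (\<Prod>j\<in>S. g j (y j)) \<partial>cube_measure S)"
  proof (intro nn_integral_cong)
    fix y
    have "(\<Prod>j\<in>S. g j (y j)) = (\<Prod>j\<in>u. ennreal (kern \<alpha> (y j) (t j)))"
      using assms(1,2) by (subst prod.mono_neutral_right[of S u]) (auto simp: g_def)
    then show "ennreal (kern_prod \<alpha> u y t) = (\<Prod>j\<in>S. g j (y j))"
      by (simp add: kern_prod_def prod_ennreal kern_nonneg)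
  qed
  also have "\<dots> = (\<Prod>j\<in>S. \<integral>\<^sup>+z. g j z \<partial>restrict_space lborel {0..1})"
    unfolding cube_measure_def
    by (rule product_nn_integral_prod[OF assms(1)]) (auto simp: g_def intro!: measurable_restrict_space1)
  also have "\<dots> = (\<Prod>j\<in>u. ennreal ((1 - t j) powr \<alpha> / \<alpha>))"
    using assms(3,4) prob_space.emeasure_space_1[OF prob_space_unit_interval]
    by (intro prod.mono_neutral_cong_right[OF assms(1,2)]) (auto simp: g_def nn_integral_kern_fst)
  also have "\<dots> = ennreal (kern_integral \<alpha> u t)"
    using assms(3) by (simp add: prod_ennreal kern_integral_def prod_dividef powr_minus powr_realpow
        divide_inverse mult.commute prod.distrib power_inverse)
  finally show ?thesis .
qed

lemma Lp_norm_kern_prod_less_top: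
  assumes "finite u" "\<And>j. j \<in> u \<Longrightarrow> y j \<in> {0..1}" "0 < r" "-1 < (\<alpha> - 1) * r"
  shows "Lp_norm (cube_measure u) (ereal r) (kern_prod \<alpha> u y) < \<infinity>"
proof -
  interpret product_sigma_finite "\<lambda>_::nat. restrict_space lborel {0..1::real}"
    by (rule product_sigma_finite_unit_interval)
  define a where "a = (\<alpha> - 1) * r + 1"
  have a: "0 < a" using assms(4) by (simp add: a_def)
  have "(\<integral>\<^sup>+t. ennreal (\<bar>kern_prod \<alpha> u y t\<bar> powr r) \<partial>cube_measure u)
      = (\<integral>\<^sup>+t. (\<Prod>j\<in>u. ennreal (kern a (y j) (t j))) \<partial>cube_measure u)"
    using assms(3) by (intro nn_integral_cong)
      (simp add: kern_prod_def prod_nonneg kern_nonneg prod_powr_distrib kern_powr a_def prod_ennreal)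
  also have "\<dots> = (\<Prod>j\<in>u. \<integral>\<^sup>+z. ennreal (kern a (y j) z) \<partial>restrict_space lborel {0..1})"
    unfolding cube_measure_def
    by (rule product_nn_integral_prod[OF assms(1)]) (auto intro!: measurable_restrict_space1)
  also have "\<dots> = (\<Prod>j\<in>u. ennreal (y j powr a / a))"
    using assms(2) a by (intro prod.cong refl nn_integral_kern_snd) auto
  also have "\<dots> < \<infinity>"
    by (simp add: less_top[symmetric] ennreal_prod_eq_top)
  finally show ?thesis
    unfolding Lp_norm_ereal_less_top_iff .
qed

lemma integrable_kern_prod_pair:
  assumes "0 < \<alpha>" "finite S" "u \<subseteq> S"
    and F [measurable]: "F \<in> borel_measurable (cube_measure u)" and "integrable (cube_measure u) F"
  shows "integrable (cube_measure S \<Otimes>\<^sub>M cube_measure u) (\<lambda>(y, t). F t * kern_prod \<alpha> u y t)"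
proof -
  let ?S = "cube_measure S" and ?U = "cube_measure u"
  interpret pair_sigma_finite ?S ?U
    by (rule pair_sigma_finite_cube_measure)
  have "(\<lambda>z. kern_prod \<alpha> u (fst z) (snd z)) \<in> borel_measurable (?S \<Otimes>\<^sub>M ?U)"
    using assms(3)
    by (intro borel_measurable_kern_prod measurable_compose[OF measurable_fst borel_measurable_cube_component]
        measurable_compose[OF measurable_snd borel_measurable_cube_component]) auto
  then have FK_measurable: "(\<lambda>(y, t). F t * kern_prod \<alpha> u y t) \<in> borel_measurable (?S \<Otimes>\<^sub>M ?U)"
    by (simp add: case_prod_beta')
  have "(\<integral>\<^sup>+z. ennreal (norm ((\<lambda>(y, t). F t * kern_prod \<alpha> u y t) z)) \<partial>(?S \<Otimes>\<^sub>M ?U))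
      = (\<integral>\<^sup>+t. (\<integral>\<^sup>+y. ennreal \<bar>F t\<bar> * ennreal (kern_prod \<alpha> u y t) \<partial>?S) \<partial>?U)"
    using FK_measurable
    by (subst nn_integral_snd[symmetric]) (auto simp: abs_mult kern_prod_nonneg ennreal_mult)
  also have "\<dots> = (\<integral>\<^sup>+t. ennreal \<bar>F t\<bar> * ennreal (kern_integral \<alpha> u t) \<partial>?U)"
  proof (intro nn_integral_cong)
    fix t assume "t \<in> space ?U"
    then have "(\<integral>\<^sup>+y. ennreal (kern_prod \<alpha> u y t) \<partial>?S) = ennreal (kern_integral \<alpha> u t)"
      using assms(1-3) by (intro nn_integral_kern_prod_fst) (auto simp: space_cube_measure PiE_iff)
    moreover have "(\<lambda>y. ennreal (kern_prod \<alpha> u y t)) \<in> borel_measurable ?S"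
      by (rule measurable_compose[OF borel_measurable_kern_prod_fst[OF assms(3)] measurable_ennreal])
    ultimately show "(\<integral>\<^sup>+y. ennreal \<bar>F t\<bar> * ennreal (kern_prod \<alpha> u y t) \<partial>?S)
        = ennreal \<bar>F t\<bar> * ennreal (kern_integral \<alpha> u t)"
      by (simp add: nn_integral_cmult)
  qed
  also have "\<dots> \<le> (\<integral>\<^sup>+t. ennreal \<bar>F t\<bar> * ennreal (\<alpha> powr (- real (card u))) \<partial>?U)"
    using abs_kern_integral_le[OF assms(1)]
    by (intro nn_integral_mono mult_left_mono ennreal_leI) (auto intro: order_trans[OF abs_ge_self])
  also have "\<dots> = (\<integral>\<^sup>+t. ennreal \<bar>F t\<bar> \<partial>?U) * ennreal (\<alpha> powr (- real (card u)))"
    by (intro nn_integral_multc) measurable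
  also have "\<dots> < \<infinity>"
    using assms(5) by (simp add: integrable_iff_bounded ennreal_mult_less_top)
  finally show ?thesis
    using FK_measurable by (intro integrableI_bounded) auto
qed

lemma integral_kern_prod_fst:
  assumes "0 < \<alpha>" "finite S" "u \<subseteq> S"
    and "F \<in> borel_measurable (cube_measure u)" "integrable (cube_measure u) F"
  shows "integrable (cube_measure S) (\<lambda>y. \<integral>t. F t * kern_prod \<alpha> u y t \<partial>cube_measure u)"
    and "(\<integral>y. (\<integral>t. F t * kern_prod \<alpha> u y t \<partial>cube_measure u) \<partial>cube_measure S)
      = (\<integral>t. F t * kern_integral \<alpha> u t \<partial>cube_measure u)"
proof -
  let ?S = "cube_measure S" and ?U = "cube_measure u"
  interpret pair_sigma_finite ?S ?U
    by (rule pair_sigma_finite_cube_measure)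
  note integrable_FK = integrable_kern_prod_pair[OF assms]
  show "integrable ?S (\<lambda>y. \<integral>t. F t * kern_prod \<alpha> u y t \<partial>?U)"
    using integrable_fst'[OF integrable_FK] by simp
  have "(\<integral>y. (\<integral>t. F t * kern_prod \<alpha> u y t \<partial>?U) \<partial>?S) = (\<integral>t. (\<integral>y. F t * kern_prod \<alpha> u y t \<partial>?S) \<partial>?U)"
    using Fubini_integral[OF integrable_FK] by simp
  also have "\<dots> = (\<integral>t. F t * kern_integral \<alpha> u t \<partial>?U)"
  proof (rule Bochner_Integration.integral_cong[OF refl])
    fix t assume "t \<in> space ?U"
    then have "(\<integral>\<^sup>+y. ennreal (kern_prod \<alpha> u y t) \<partial>?S) = ennreal (kern_integral \<alpha> u t)"
      using assms(1-3) by (intro nn_integral_kern_prod_fst) (auto simp: space_cube_measure PiE_iff)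
    then have "(\<integral>y. kern_prod \<alpha> u y t \<partial>?S) = kern_integral \<alpha> u t"
      using assms(1,3)
      by (subst integral_eq_nn_integral)
        (auto simp: kern_prod_nonneg kern_integral_def prod_nonneg borel_measurable_kern_prod_fst)
    then show "(\<integral>y. F t * kern_prod \<alpha> u y t \<partial>?S) = F t * kern_integral \<alpha> u t"
      by simp
  qed
  finally show "(\<integral>y. (\<integral>t. F t * kern_prod \<alpha> u y t \<partial>?U) \<partial>?S) = (\<integral>t. F t * kern_integral \<alpha> u t \<partial>?U)" .
qed

lemma rep_norm_eq_Lp_norm_count_space:
  assumes "1 \<le> q" "\<And>u. u \<subseteq> {1..s} \<Longrightarrow> Lp_norm (cube_measure u) p (F u) < \<infinity>"
  shows "rep_norm \<alpha> s p q F = Lp_norm (count_space (Pow {1..s})) q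
     (\<lambda>u. Gamma \<alpha> powr (- real (card u)) * enn2real (Lp_norm (cube_measure u) p (F u)))"
proof -
  have "0 < q" using assms(1) by (cases q) auto
  then have "rep_norm \<alpha> s p q F = Lp_norm (count_space (Pow {1..s})) q
     (\<lambda>u. enn2real (ennreal (Gamma \<alpha> powr (- real (card u))) * Lp_norm (cube_measure u) p (F u)))"
    unfolding rep_norm_def Let_def
    using assms(2) by (intro Max_or_enn_powr_sum_eq_Lp_norm_count_space) (auto simp: ennreal_mult_less_top)
  then show ?thesis
    by (simp add: enn2real_mult)
qed

lemma rep_norm_le_Lp_norm_count_space:
  assumes "0 < \<alpha>" "1 \<le> q"
    and "\<And>u. u \<subseteq> {1..s} \<Longrightarrow>
      Lp_norm (cube_measure u) p (F u) \<le> ennreal (\<bar>w u\<bar> / Gamma \<alpha> powr (- real (card u)))"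
  shows "rep_norm \<alpha> s p q F \<le> Lp_norm (count_space (Pow {1..s})) q w"
proof -
  define G where "G u = Gamma \<alpha> powr (- real (card u))" for u :: "nat set"
  have G_pos: "0 < G u" for u
    using Gamma_real_pos[OF assms(1)] by (simp add: G_def)
  have "Lp_norm (cube_measure u) p (F u) < \<infinity>" if "u \<subseteq> {1..s}" for u
    using le_less_trans[OF assms(3)[OF that] ennreal_less_top] by simp
  then have "rep_norm \<alpha> s p q F
      = Lp_norm (count_space (Pow {1..s})) q (\<lambda>u. G u * enn2real (Lp_norm (cube_measure u) p (F u)))"
    unfolding G_def by (rule rep_norm_eq_Lp_norm_count_space[OF assms(2)])
  also have "\<dots> \<le> Lp_norm (count_space (Pow {1..s})) q w"
  proof (rule Lp_norm_mono)
    fix u assume "u \<in> space (count_space (Pow {1..s}))"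
    then have "enn2real (Lp_norm (cube_measure u) p (F u)) \<le> \<bar>w u\<bar> / G u"
      using enn2real_mono[OF assms(3)] G_pos[of u] by (simp add: G_def)
    then show "\<bar>G u * enn2real (Lp_norm (cube_measure u) p (F u))\<bar> \<le> \<bar>w u\<bar>"
      using G_pos[of u] by (simp add: pos_le_divide_eq mult.commute)
  qed (use assms(2) in \<open>auto intro: less_le_trans[of 0 1]\<close>)
  finally show ?thesis .
qed

section \<open>The worst-case error\<close>

lemma ennreal_le_of_Inf_le_1:
  fixes e D :: ennreal
  assumes "Inf R \<le> 1" "\<And>r. r \<in> R \<Longrightarrow> e \<le> r * D"
  shows "e \<le> D"
proof (cases D)
  case (real d)
  show ?thesis
  proof (rule ennreal_le_epsilon)
    fix \<epsilon> :: real assume "0 < \<epsilon>"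
    define c where "c = 1 + \<epsilon> / (d + 1)"
    have c: "1 < c" "c * d \<le> d + \<epsilon>"
      using \<open>0 < \<epsilon>\<close> real(1) by (auto simp: c_def field_simps)
    then have "Inf R < ennreal c"
      using assms(1) by (simp add: le_less_trans)
    then obtain r where r: "r \<in> R" "r < ennreal c"
      by (auto simp: Inf_less_iff)
    have "e \<le> r * D" by (rule assms(2)[OF r(1)])
    also have "\<dots> \<le> ennreal c * ennreal d"
      using r(2) unfolding real(2) by (intro mult_right_mono) auto
    also have "\<dots> = ennreal (c * d)"
      using c(1) real(1) by (simp add: ennreal_mult)
    also have "\<dots> \<le> ennreal (d + \<epsilon>)"
      by (rule ennreal_leI[OF c(2)])
    also have "\<dots> = D + ennreal \<epsilon>"
      using real \<open>0 < \<epsilon>\<close> by (simp add: ennreal_plus)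
    finally show "e \<le> D + ennreal \<epsilon>" .
  qed
qed simp

locale fractional_qmc =
  fixes \<alpha> :: real and p :: ereal and s N :: nat and x :: "nat \<Rightarrow> nat \<Rightarrow> real"
  assumes \<alpha>_pos: "0 < \<alpha>" and \<alpha>_le_1: "\<alpha> \<le> 1" and p_gt_inverse_\<alpha>: "ereal (1 / \<alpha>) < p"
    and N_ge_1: "1 \<le> N" and points_in_cube: "\<forall>n<N. x n \<in> cube s"
begin

abbreviation p' :: ereal where "p' \<equiv> conj_exp p"

lemma p_gt_1: "1 < p"
proof -
  have "ereal 1 \<le> ereal (1 / \<alpha>)"
    using \<alpha>_pos \<alpha>_le_1 by (simp add: field_simps)
  then show ?thesis
    using p_gt_inverse_\<alpha> unfolding one_ereal_def by (rule le_less_trans)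
qed

lemma conjugate_exponents_p: "conjugate_exponents p p'"
  using p_gt_1 by (intro conjugate_exponents_conj_exp) simp

lemma p'_gt_0: "0 < p'"
  using p_gt_1 by (intro conj_exp_gt_0) simp

text \<open>This is where \<open>p > 1/\<alpha>\<close> enters: it is equivalent to \<open>(\<alpha> - 1) p' > -1\<close>, i.e. to the
  kernel \<open>(x - t)\<^sub>+\<^sup>\<alpha>\<^sup>-\<^sup>1\<close> being \<open>p'\<close>-integrable.\<close>

lemma conj_exp_p_eq_ereal:
  obtains r where "p' = ereal r" "0 < r" "-1 < (\<alpha> - 1) * r"
proof (cases p)
  case (real r)
  have "1 < r" "1 < \<alpha> * r"
    using p_gt_1 p_gt_inverse_\<alpha> \<alpha>_pos real by (simp_all add: field_simps)
  then show ?thesis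
    using real by (intro that[of "r / (r - 1)"]) (auto simp: conj_exp_def field_simps)
next
  case PInf
  then show ?thesis
    using \<alpha>_pos by (intro that[of 1]) (auto simp: conj_exp_def)
qed (use p_gt_1 in simp)

lemma points_in_unit_interval: "n < N \<Longrightarrow> j \<in> {1..s} \<Longrightarrow> x n j \<in> {0..1}"
  using points_in_cube unfolding cube_def by auto

lemma borel_measurable_frac_disc_local: "frac_disc_local \<alpha> N x u \<in> borel_measurable (cube_measure u)"
  unfolding frac_disc_local_eq[abs_def]
  by (intro borel_measurable_diff borel_measurable_times borel_measurable_const borel_measurable_sum
      borel_measurable_kern_integral borel_measurable_kern_prod_snd)

lemma Lp_norm_kern_prod_point_less_top:
  assumes "u \<subseteq> {1..s}" "n < N"
  shows "Lp_norm (cube_measure u) p' (kern_prod \<alpha> u (x n)) < \<infinity>"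
proof -
  obtain r where r: "p' = ereal r" "0 < r" "-1 < (\<alpha> - 1) * r"
    by (rule conj_exp_p_eq_ereal)
  show ?thesis
    unfolding r(1) using assms r(2,3) points_in_unit_interval[OF assms(2)]
    by (intro Lp_norm_kern_prod_less_top) (auto intro: finite_subset)
qed

lemma Lp_norm_kern_integral_less_top: "Lp_norm (cube_measure u) p' (kern_integral \<alpha> u) < \<infinity>"
  using prob_space_cube_measure abs_kern_integral_le[OF \<alpha>_pos] p'_gt_0
  by (intro Lp_norm_bounded_less_top borel_measurable_kern_integral) (auto simp: prob_space_def)

lemma Lp_norm_frac_disc_local_less_top:
  assumes "u \<subseteq> {1..s}"
  shows "Lp_norm (cube_measure u) p' (frac_disc_local \<alpha> N x u) < \<infinity>"
proof -
  obtain r where r: "p' = ereal r" "0 < r"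
    by (rule conj_exp_p_eq_ereal)
  let ?K = "\<lambda>t. \<Sum>n<N. kern_prod \<alpha> u (x n) t"
  have K: "?K \<in> borel_measurable (cube_measure u)"
    by (intro borel_measurable_sum borel_measurable_kern_prod_snd)
  have "Lp_norm (cube_measure u) p' ?K < \<infinity>"
    unfolding r(1) using r Lp_norm_kern_prod_point_less_top[OF assms]
    by (intro Lp_norm_sum_less_top borel_measurable_kern_prod_snd) auto
  then have "Lp_norm (cube_measure u) p' (\<lambda>t. (- (1 / real N)) * ?K t) < \<infinity>"
    using r by (intro le_less_trans[OF Lp_norm_cmult_le[OF _ K]]) (auto simp: ennreal_mult_less_top)
  then have "Lp_norm (cube_measure u) p' (\<lambda>t. kern_integral \<alpha> u t + (- (1 / real N)) * ?K t) < \<infinity>"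
    unfolding r(1) using r(2) K Lp_norm_kern_integral_less_top
    by (intro Lp_norm_add_less_top borel_measurable_kern_integral) (auto simp: r(1))
  then show ?thesis
    unfolding frac_disc_local_eq[abs_def] by simp
qed

lemma
  assumes u: "u \<subseteq> {1..s}" and F: "memLp (cube_measure u) p F"
  shows integrable_kern_prod_transform:
      "integrable (cube_measure {1..s}) (\<lambda>y. \<integral>t. F t * kern_prod \<alpha> u y t \<partial>cube_measure u)"
    and integral_mult_frac_disc_local:
      "(\<integral>t. F t * frac_disc_local \<alpha> N x u t \<partial>cube_measure u)
        = (\<integral>y. (\<integral>t. F t * kern_prod \<alpha> u y t \<partial>cube_measure u) \<partial>cube_measure {1..s})
          - (1 / real N) * (\<Sum>n<N. \<integral>t. F t * kern_prod \<alpha> u (x n) t \<partial>cube_measure u)"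
proof -
  have F_measurable: "F \<in> borel_measurable (cube_measure u)"
    and F_norm: "Lp_norm (cube_measure u) p F < \<infinity>"
    using F by (simp_all add: memLp_def)
  have F_integrable: "integrable (cube_measure u) F"
    using prob_space_cube_measure p_gt_1 F_measurable F_norm
    by (intro integrable_of_Lp_norm_less_top) auto
  have FK_integrable: "integrable (cube_measure u) (\<lambda>t. F t * kern_prod \<alpha> u (x n) t)" if "n < N" for n
    using Lp_norm_kern_prod_point_less_top[OF u that]
    by (intro integrable_mult_Lp_norm[OF conjugate_exponents_p F_measurable _ F_norm]
        borel_measurable_kern_prod_snd)
  have FA_integrable: "integrable (cube_measure u) (\<lambda>t. F t * kern_integral \<alpha> u t)"
    by (intro integrable_mult_Lp_norm[OF conjugate_exponents_p F_measurable _ F_norm]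
        borel_measurable_kern_integral Lp_norm_kern_integral_less_top)
  note Fubini = integral_kern_prod_fst[OF \<alpha>_pos _ u F_measurable F_integrable]
  show "integrable (cube_measure {1..s}) (\<lambda>y. \<integral>t. F t * kern_prod \<alpha> u y t \<partial>cube_measure u)"
    using Fubini(1) by simp
  have "(\<integral>t. F t * frac_disc_local \<alpha> N x u t \<partial>cube_measure u)
      = (\<integral>t. F t * kern_integral \<alpha> u t - (1 / real N) * (\<Sum>n<N. F t * kern_prod \<alpha> u (x n) t) \<partial>cube_measure u)"
    by (simp add: frac_disc_local_eq right_diff_distrib sum_distrib_left mult.left_commute)
  also have "\<dots> = (\<integral>t. F t * kern_integral \<alpha> u t \<partial>cube_measure u)
      - (\<integral>t. (1 / real N) * (\<Sum>n<N. F t * kern_prod \<alpha> u (x n) t) \<partial>cube_measure u)"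
    using FK_integrable
    by (intro Bochner_Integration.integral_diff FA_integrable integrable_mult_right integrable_sum) auto
  also have "(\<integral>t. (1 / real N) * (\<Sum>n<N. F t * kern_prod \<alpha> u (x n) t) \<partial>cube_measure u)
      = (1 / real N) * (\<Sum>n<N. \<integral>t. F t * kern_prod \<alpha> u (x n) t \<partial>cube_measure u)"
    using FK_integrable by (simp add: Bochner_Integration.integral_sum)
  finally show "(\<integral>t. F t * frac_disc_local \<alpha> N x u t \<partial>cube_measure u)
      = (\<integral>y. (\<integral>t. F t * kern_prod \<alpha> u y t \<partial>cube_measure u) \<partial>cube_measure {1..s})
        - (1 / real N) * (\<Sum>n<N. \<integral>t. F t * kern_prod \<alpha> u (x n) t \<partial>cube_measure u)"
    using Fubini(2) by simp
qed

lemma integration_error_eq: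
  assumes "represents \<alpha> s p F f"
  shows "(\<integral>y. f y \<partial>cube_measure {1..s}) - QMC N x f
    = (\<Sum>u\<in>Pow {1..s}. Gamma \<alpha> powr (- real (card u)) * (\<integral>t. F u t * frac_disc_local \<alpha> N x u t \<partial>cube_measure u))"
proof -
  define G where "G u = Gamma \<alpha> powr (- real (card u))" for u :: "nat set"
  define I where "I u y = (\<integral>t. F u t * kern_prod \<alpha> u y t \<partial>cube_measure u)" for u y
  have F: "memLp (cube_measure u) p (F u)" if "u \<in> Pow {1..s}" for u
    using assms that unfolding represents_def by auto
  have f: "f y = (\<Sum>u\<in>Pow {1..s}. G u * I u y)" if "y \<in> cube s" for y
    using assms that unfolding represents_def G_def I_def kern_prod_def by auto
  have "(\<integral>y. f y \<partial>cube_measure {1..s}) = (\<integral>y. (\<Sum>u\<in>Pow {1..s}. G u * I u y) \<partial>cube_measure {1..s})"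
    using f by (intro Bochner_Integration.integral_cong) (auto simp: space_cube_measure cube_def PiE_iff)
  also have "\<dots> = (\<Sum>u\<in>Pow {1..s}. G u * (\<integral>y. I u y \<partial>cube_measure {1..s}))"
    using integrable_kern_prod_transform[OF _ F] unfolding I_def
    by (subst Bochner_Integration.integral_sum) (auto intro: integrable_mult_right)
  finally have integral_f: "(\<integral>y. f y \<partial>cube_measure {1..s}) = \<dots>" .
  have "QMC N x f = (1 / real N) * (\<Sum>n<N. \<Sum>u\<in>Pow {1..s}. G u * I u (x n))"
    unfolding QMC_def using f points_in_cube by simp
  also have "\<dots> = (\<Sum>u\<in>Pow {1..s}. G u * ((1 / real N) * (\<Sum>n<N. I u (x n))))"
    by (subst sum.swap) (simp add: sum_distrib_left mult.left_commute)
  finally have QMC_f: "QMC N x f = \<dots>" .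
  show ?thesis
    unfolding integral_f QMC_f G_def[symmetric] sum_subtractf[symmetric] right_diff_distrib[symmetric]
    using integral_mult_frac_disc_local[OF _ F] by (intro sum.cong) (auto simp: I_def[abs_def])
qed

definition disc_norm :: "nat set \<Rightarrow> real" where
  "disc_norm u = enn2real (Lp_norm (cube_measure u) p' (frac_disc_local \<alpha> N x u))"

lemma disc_norm_empty: "disc_norm {} = 0"
proof -
  obtain r where "p' = ereal r" "0 < r"
    by (rule conj_exp_p_eq_ereal)
  moreover have "frac_disc_local \<alpha> N x {} = (\<lambda>_. 0)"
    using N_ge_1 \<alpha>_pos by (simp add: frac_disc_local_def fun_eq_iff)
  ultimately show ?thesis
    by (simp add: disc_norm_def Lp_norm_zero)
qed

lemma frac_disc_eq_Lp_norm_count_space: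
  assumes "1 \<le> s" "1 \<le> q"
  shows "frac_disc \<alpha> s p' (conj_exp q) N x = Lp_norm (count_space (Pow {1..s})) (conj_exp q) disc_norm"
proof -
  have nonempty: "Pow {1..s} - {{}} \<noteq> {}"
    using assms(1) by (auto intro!: exI[of _ "{1}"])
  have "0 < conj_exp q"
    by (rule conj_exp_gt_0[OF assms(2)])
  then have "frac_disc \<alpha> s p' (conj_exp q) N x = Lp_norm (count_space (Pow {1..s} - {{}})) (conj_exp q) disc_norm"
    unfolding frac_disc_def Let_def disc_norm_def using nonempty Lp_norm_frac_disc_local_less_top
    by (intro Max_or_enn_powr_sum_eq_Lp_norm_count_space) auto
  also have "\<dots> = Lp_norm (count_space (Pow {1..s})) (conj_exp q) disc_norm"
    using disc_norm_empty nonempty \<open>0 < conj_exp q\<close> by (intro Lp_norm_count_space_subset[symmetric]) auto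
  finally show ?thesis .
qed

lemma abs_integral_mult_frac_disc_local_le:
  assumes "u \<subseteq> {1..s}" "memLp (cube_measure u) p F"
  shows "\<bar>\<integral>t. F t * frac_disc_local \<alpha> N x u t \<partial>cube_measure u\<bar>
    \<le> enn2real (Lp_norm (cube_measure u) p F) * disc_norm u"
proof -
  have F: "F \<in> borel_measurable (cube_measure u)" "Lp_norm (cube_measure u) p F < \<infinity>"
    using assms(2) by (simp_all add: memLp_def)
  have "ennreal \<bar>\<integral>t. F t * frac_disc_local \<alpha> N x u t \<partial>cube_measure u\<bar>
      \<le> Lp_norm (cube_measure u) p F * Lp_norm (cube_measure u) p' (frac_disc_local \<alpha> N x u)"
    using F Lp_norm_frac_disc_local_less_top[OF assms(1)]
    by (intro abs_integral_mult_le_Lp_norm[OF conjugate_exponents_p] borel_measurable_frac_disc_local)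
  also have "\<dots> = ennreal (enn2real (Lp_norm (cube_measure u) p F) * disc_norm u)"
    using F(2) Lp_norm_frac_disc_local_less_top[OF assms(1)]
    by (simp add: disc_norm_def ennreal_mult less_top)
  finally show ?thesis
    by (simp add: ennreal_le_iff disc_norm_def)
qed

lemma abs_integration_error_le:
  assumes "1 \<le> q" "represents \<alpha> s p F f"
  shows "ennreal \<bar>(\<integral>y. f y \<partial>cube_measure {1..s}) - QMC N x f\<bar>
    \<le> rep_norm \<alpha> s p q F * Lp_norm (count_space (Pow {1..s})) (conj_exp q) disc_norm"
proof -
  define c where "c u = Gamma \<alpha> powr (- real (card u)) * enn2real (Lp_norm (cube_measure u) p (F u))"
    for u :: "nat set"
  have F: "memLp (cube_measure u) p (F u)" if "u \<in> Pow {1..s}" for u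
    using assms(2) that unfolding represents_def by auto
  have "\<bar>(\<integral>y. f y \<partial>cube_measure {1..s}) - QMC N x f\<bar>
      \<le> (\<Sum>u\<in>Pow {1..s}. Gamma \<alpha> powr (- real (card u))
          * \<bar>\<integral>t. F u t * frac_disc_local \<alpha> N x u t \<partial>cube_measure u\<bar>)"
    unfolding integration_error_eq[OF assms(2)] by (rule order_trans[OF sum_abs]) (simp add: abs_mult)
  also have "\<dots> \<le> (\<Sum>u\<in>Pow {1..s}. c u * disc_norm u)"
    unfolding c_def mult.assoc using abs_integral_mult_frac_disc_local_le[OF _ F]
    by (intro sum_mono mult_left_mono) auto
  finally have "ennreal \<bar>(\<integral>y. f y \<partial>cube_measure {1..s}) - QMC N x f\<bar> \<le> ennreal \<bar>\<Sum>u\<in>Pow {1..s}. c u * disc_norm u\<bar>"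
    by (intro ennreal_leI) auto
  also have "\<dots> \<le> Lp_norm (count_space (Pow {1..s})) q c * Lp_norm (count_space (Pow {1..s})) (conj_exp q) disc_norm"
    by (intro abs_sum_mult_le_Lp_norm_count_space conjugate_exponents_conj_exp assms(1)) simp
  also have "Lp_norm (count_space (Pow {1..s})) q c = rep_norm \<alpha> s p q F"
    unfolding c_def using F by (intro rep_norm_eq_Lp_norm_count_space[OF assms(1), symmetric]) (auto simp: memLp_def)
  finally show ?thesis .
qed

lemma e_wor_le_Lp_norm_disc_norm:
  assumes "1 \<le> q"
  shows "e_wor \<alpha> s p q N x \<le> Lp_norm (count_space (Pow {1..s})) (conj_exp q) disc_norm"
  unfolding e_wor_def
proof (rule Sup_least, safe)
  fix f assume "H_norm \<alpha> s p q f \<le> 1"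
  then show "ennreal \<bar>(\<integral>y. f y \<partial>cube_measure {1..s}) - QMC N x f\<bar>
      \<le> Lp_norm (count_space (Pow {1..s})) (conj_exp q) disc_norm"
    unfolding H_norm_def by (rule ennreal_le_of_Inf_le_1) (blast intro: abs_integration_error_le[OF assms])
qed

lemma frac_disc_local_norming_functions:
  obtains g where "\<And>u. u \<subseteq> {1..s} \<Longrightarrow> g u \<in> borel_measurable (cube_measure u)"
    "\<And>u. u \<subseteq> {1..s} \<Longrightarrow> Lp_norm (cube_measure u) p (g u) \<le> 1"
    "\<And>u. u \<subseteq> {1..s} \<Longrightarrow> (\<integral>t. g u t * frac_disc_local \<alpha> N x u t \<partial>cube_measure u) = disc_norm u"
proof -
  have "\<exists>g. g \<in> borel_measurable (cube_measure u) \<and> Lp_norm (cube_measure u) p g \<le> 1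
      \<and> integrable (cube_measure u) (\<lambda>t. g t * frac_disc_local \<alpha> N x u t)
      \<and> (\<integral>t. g t * frac_disc_local \<alpha> N x u t \<partial>cube_measure u) = disc_norm u"
    if "u \<subseteq> {1..s}" for u
    unfolding disc_norm_def using p_gt_1
    by (intro Lp_norm_dual_attained[OF conjugate_exponents_p] borel_measurable_frac_disc_local
        Lp_norm_frac_disc_local_less_top[OF that]) auto
  then show ?thesis
    using that by metis
qed

lemma extremal_representation:
  assumes "1 \<le> q"
  obtains F f where "represents \<alpha> s p F f" "rep_norm \<alpha> s p q F \<le> 1"
    "(\<integral>y. f y \<partial>cube_measure {1..s}) - QMC N x f
      = enn2real (Lp_norm (count_space (Pow {1..s})) (conj_exp q) disc_norm)"
proof -
  let ?U = "Pow {1..s}"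
  obtain w where w_norm: "Lp_norm (count_space ?U) q w \<le> 1"
    and w_sum: "(\<Sum>u\<in>?U. w u * disc_norm u) = enn2real (Lp_norm (count_space ?U) (conj_exp q) disc_norm)"
    by (rule Lp_norm_count_space_dual_attained[OF conjugate_exponents_conj_exp[OF assms],
          where U = ?U and a = disc_norm]) auto
  obtain g where g_measurable: "\<And>u. u \<subseteq> {1..s} \<Longrightarrow> g u \<in> borel_measurable (cube_measure u)"
    and g_norm: "\<And>u. u \<subseteq> {1..s} \<Longrightarrow> Lp_norm (cube_measure u) p (g u) \<le> 1"
    and g_integral: "\<And>u. u \<subseteq> {1..s} \<Longrightarrow> (\<integral>t. g u t * frac_disc_local \<alpha> N x u t \<partial>cube_measure u) = disc_norm u"
    using frac_disc_local_norming_functions by blast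
  define G where "G u = Gamma \<alpha> powr (- real (card u))" for u :: "nat set"
  have G_pos: "0 < G u" for u
    using Gamma_real_pos[OF \<alpha>_pos] by (simp add: G_def)
  define F where "F u t = w u / G u * g u t" for u t
  define f where "f y = (\<Sum>u\<in>?U. G u * (\<integral>t. F u t * (\<Prod>j\<in>u. kern \<alpha> (y j) (t j)) \<partial>cube_measure u))" for y
  have F_measurable: "F u \<in> borel_measurable (cube_measure u)" if "u \<subseteq> {1..s}" for u
    unfolding F_def[abs_def] using g_measurable[OF that] by measurable
  have F_norm: "Lp_norm (cube_measure u) p (F u) \<le> ennreal (\<bar>w u\<bar> / G u)" if "u \<subseteq> {1..s}" for u
  proof -
    have "Lp_norm (cube_measure u) p (F u) \<le> ennreal \<bar>w u / G u\<bar> * Lp_norm (cube_measure u) p (g u)"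
      unfolding F_def[abs_def] using p_gt_1 g_measurable[OF that]
      by (intro Lp_norm_cmult_le) (auto intro: less_trans[of 0 1])
    also have "\<dots> \<le> ennreal \<bar>w u / G u\<bar>"
      using mult_left_mono[OF g_norm[OF that], of "ennreal \<bar>w u / G u\<bar>"] by simp
    finally show ?thesis
      using G_pos[of u] by (simp add: abs_divide)
  qed
  have F_finite: "Lp_norm (cube_measure u) p (F u) < \<infinity>" if "u \<subseteq> {1..s}" for u
    using le_less_trans[OF F_norm[OF that] ennreal_less_top] by simp
  have F_represents: "represents \<alpha> s p F f"
    unfolding represents_def memLp_def using F_measurable F_finite by (auto simp: f_def G_def)
  have rep_norm_F: "rep_norm \<alpha> s p q F \<le> 1"
    using rep_norm_le_Lp_norm_count_space[OF \<alpha>_pos assms F_norm[unfolded G_def]] w_norm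
    by (rule order_trans)
  have "(\<integral>y. f y \<partial>cube_measure {1..s}) - QMC N x f
      = (\<Sum>u\<in>?U. G u * (\<integral>t. F u t * frac_disc_local \<alpha> N x u t \<partial>cube_measure u))"
    unfolding G_def by (rule integration_error_eq[OF F_represents])
  also have "\<dots> = (\<Sum>u\<in>?U. w u * disc_norm u)"
    using g_integral G_pos[THEN less_imp_neq] by (intro sum.cong) (auto simp: F_def mult.assoc)
  finally show ?thesis
    using F_represents rep_norm_F w_sum that by simp
qed

lemma Lp_norm_disc_norm_le_e_wor:
  assumes "1 \<le> q"
  shows "Lp_norm (count_space (Pow {1..s})) (conj_exp q) disc_norm \<le> e_wor \<alpha> s p q N x"
proof -
  let ?D = "Lp_norm (count_space (Pow {1..s})) (conj_exp q) disc_norm"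
  obtain F f where F: "represents \<alpha> s p F f" "rep_norm \<alpha> s p q F \<le> 1"
    and error: "(\<integral>y. f y \<partial>cube_measure {1..s}) - QMC N x f = enn2real ?D"
    by (rule extremal_representation[OF assms])
  have "f \<in> H_space \<alpha> s p"
    using F(1) unfolding H_space_def by auto
  moreover have "H_norm \<alpha> s p q f \<le> 1"
    unfolding H_norm_def using F by (intro Inf_lower2) auto
  moreover have "?D < \<infinity>"
    using conj_exp_gt_0[OF assms] by (intro Lp_norm_count_space_less_top) auto
  then have "?D = ennreal \<bar>(\<integral>y. f y \<partial>cube_measure {1..s}) - QMC N x f\<bar>"
    unfolding error by (simp add: less_top)
  ultimately show ?thesis
    unfolding e_wor_def by (intro Sup_upper) blast
qed

end

theorem theorem6:
  fixes s N :: nat and \<alpha> :: real and p q :: ereal and x :: "nat \<Rightarrow> nat \<Rightarrow> real"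
  assumes "1 \<le> s" and "0 < \<alpha>" and "\<alpha> \<le> 1"
    and "ereal (1 / \<alpha>) < p"
    and "1 \<le> q"
    and "1 \<le> N"
    and "\<forall>n<N. x n \<in> cube s"
  shows "e_wor \<alpha> s p q N x = frac_disc \<alpha> s (conj_exp p) (conj_exp q) N x"
proof -
  interpret fractional_qmc \<alpha> p s N x
    using assms by unfold_locales auto
  have "e_wor \<alpha> s p q N x = Lp_norm (count_space (Pow {1..s})) (conj_exp q) disc_norm"
    using e_wor_le_Lp_norm_disc_norm[OF assms(5)] Lp_norm_disc_norm_le_e_wor[OF assms(5)]
    by (rule antisym)
  also have "\<dots> = frac_disc \<alpha> s (conj_exp p) (conj_exp q) N x"
    using frac_disc_eq_Lp_norm_count_space[OF assms(1,5)] by simp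
  finally show ?thesis .
qed

end
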